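(* Let $\Gamma$ be a metrized graph with $v$ vertices. If $v=2$ then $Kf(\Gamma)=y(\Gamma)$; if $v=3$ then $Kf(\Gamma)=2y(\Gamma)$.
   Context: A metrized graph $\Gamma$ is a finite connected graph (multiple edges and self-loops allowed) each of whose edges is identified with a closed segment of positive length, with a finite nonempty vertex set $V(\Gamma)$ containing every point of valence $\neq2$; $v=\#V(\Gamma)$, $L_i$ the length of $e_i$, $r$ the effective resistance (edges as resistors of resistance equal to length). $Kf(\Gamma)=\frac12\sum_{p,q\in V(\Gamma)}r(p,q)$. For an edge $e_i$ with end points $p_i,q_i$: if $\Gamma-e_i$ (interior deleted) is connected, $R_i$ is the effective resistance between $p_i,q_i$ in $\Gamma-e_i$, $R_{a_i,p}=\hat j_{p_i}(p,q_i)$, $R_{b_i,p}=\hat j_{q_i}(p,p_i)$ with $\hat j_z(x,y)$ the voltage function of $\Gamma-e_i$ (potential at $x$ when unit current enters at $y$ and exits at $z$, potential $0$ at $z$); if $e_i$ is a bridge, $R_{a_i,p}=0,R_{b_i,p}=R_i$ for $p$ in the component of $\Gamma-e_i$ containing $p_i$ and $R_{a_i,p}=R_i,R_{b_i,p}=0$ otherwise, with every expression in $R_i$ interpreted as its limit as $R_i\to\infty$; for a self-loop $R_i=0$. For a fixed vertex $p$ (independent of choice), $y(\Gamma)=\frac14\sum_{e_i}\frac{L_iR_i^2}{(L_i+R_i)^2}+\frac34\sum_{e_i}\frac{L_i(R_{a_i,p}-R_{b_i,p})^2}{(L_i+R_i)^2}$. *)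

theory Defs
  imports Complex_Main
begin

text \<open>A metrized graph is modelled by its combinatorial model: a finite nonempty vertex
set V, a finite set E of edge labels, endpoint map ends (first endpoint p_e, second q_e;
multiple edges and self-loops allowed) and positive lengths L.  Interior points of edges
have valence 2, so V contains every point of valence other than 2.\<close>

definition adj_rel :: "'e set \<Rightarrow> ('e \<Rightarrow> 'v \<times> 'v) \<Rightarrow> ('v \<times> 'v) set" where
  "adj_rel E ends = {(x, y). \<exists>e\<in>E. ends e = (x, y) \<or> ends e = (y, x)}"

definition graph_connected :: "'v set \<Rightarrow> 'e set \<Rightarrow> ('e \<Rightarrow> 'v \<times> 'v) \<Rightarrow> bool" where
  "graph_connected V E ends \<longleftrightarrow> (\<forall>x\<in>V. \<forall>y\<in>V. (x, y) \<in> (adj_rel E ends)\<^sup>*)"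

definition metrized_graph ::
  "'v set \<Rightarrow> 'e set \<Rightarrow> ('e \<Rightarrow> 'v \<times> 'v) \<Rightarrow> ('e \<Rightarrow> real) \<Rightarrow> bool" where
  "metrized_graph V E ends L \<longleftrightarrow>
     finite V \<and> V \<noteq> {} \<and> finite E \<and>
     (\<forall>e\<in>E. fst (ends e) \<in> V \<and> snd (ends e) \<in> V \<and> L e > 0) \<and>
     graph_connected V E ends"

text \<open>Current flowing out of vertex x through edge e under potential phi
(edge e is a resistor of resistance L e).\<close>
definition edge_outflow ::
  "('e \<Rightarrow> 'v \<times> 'v) \<Rightarrow> ('e \<Rightarrow> real) \<Rightarrow> ('v \<Rightarrow> real) \<Rightarrow> 'e \<Rightarrow> 'v \<Rightarrow> real" where
  "edge_outflow ends L phi e x =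
     (if fst (ends e) = x then (phi x - phi (snd (ends e))) / L e else 0) +
     (if snd (ends e) = x then (phi x - phi (fst (ends e))) / L e else 0)"

text \<open>phi is a potential for unit current entering at a and exiting at b (Kirchhoff/Ohm).\<close>
definition is_potential ::
  "'v set \<Rightarrow> 'e set \<Rightarrow> ('e \<Rightarrow> 'v \<times> 'v) \<Rightarrow> ('e \<Rightarrow> real) \<Rightarrow> 'v \<Rightarrow> 'v \<Rightarrow> ('v \<Rightarrow> real) \<Rightarrow> bool" where
  "is_potential V E ends L a b phi \<longleftrightarrow>
     (\<forall>x\<in>V. (\<Sum>e\<in>E. edge_outflow ends L phi e x) =
             (if x = a then 1 else 0) - (if x = b then 1 else 0))"

text \<open>Voltage function j_z(x,y): potential at x when unit current enters at y and exits
at z, with potential 0 at z (normalised to 0 off V to make it unique).\<close>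
definition volt ::
  "'v set \<Rightarrow> 'e set \<Rightarrow> ('e \<Rightarrow> 'v \<times> 'v) \<Rightarrow> ('e \<Rightarrow> real) \<Rightarrow> 'v \<Rightarrow> 'v \<Rightarrow> 'v \<Rightarrow> real" where
  "volt V E ends L z x y =
     (THE phi. is_potential V E ends L y z phi \<and> phi z = 0 \<and> (\<forall>u. u \<notin> V \<longrightarrow> phi u = 0)) x"

definition eff_res ::
  "'v set \<Rightarrow> 'e set \<Rightarrow> ('e \<Rightarrow> 'v \<times> 'v) \<Rightarrow> ('e \<Rightarrow> real) \<Rightarrow> 'v \<Rightarrow> 'v \<Rightarrow> real" where
  "eff_res V E ends L x y = volt V E ends L y x x"

definition kirchhoff_index ::
  "'v set \<Rightarrow> 'e set \<Rightarrow> ('e \<Rightarrow> 'v \<times> 'v) \<Rightarrow> ('e \<Rightarrow> real) \<Rightarrow> real" where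
  "kirchhoff_index V E ends L = (1/2) * (\<Sum>p\<in>V. \<Sum>q\<in>V. eff_res V E ends L p q)"

text \<open>Quantities attached to edge e (Gamma - e has the same vertices and edges E - {e}).\<close>
definition is_bridge :: "'v set \<Rightarrow> 'e set \<Rightarrow> ('e \<Rightarrow> 'v \<times> 'v) \<Rightarrow> 'e \<Rightarrow> bool" where
  "is_bridge V E ends e \<longleftrightarrow> \<not> graph_connected V (E - {e}) ends"

definition R_edge :: "'v set \<Rightarrow> 'e set \<Rightarrow> ('e \<Rightarrow> 'v \<times> 'v) \<Rightarrow> ('e \<Rightarrow> real) \<Rightarrow> 'e \<Rightarrow> real" where
  "R_edge V E ends L e = eff_res V (E - {e}) ends L (fst (ends e)) (snd (ends e))"

definition R_a :: "'v set \<Rightarrow> 'e set \<Rightarrow> ('e \<Rightarrow> 'v \<times> 'v) \<Rightarrow> ('e \<Rightarrow> real) \<Rightarrow> 'e \<Rightarrow> 'v \<Rightarrow> real" where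
  "R_a V E ends L e p = volt V (E - {e}) ends L (fst (ends e)) p (snd (ends e))"

definition R_b :: "'v set \<Rightarrow> 'e set \<Rightarrow> ('e \<Rightarrow> 'v \<times> 'v) \<Rightarrow> ('e \<Rightarrow> real) \<Rightarrow> 'e \<Rightarrow> 'v \<Rightarrow> real" where
  "R_b V E ends L e p = volt V (E - {e}) ends L (snd (ends e)) p (fst (ends e))"

text \<open>Bridge case: R_i is treated as a parameter t and the limit t \<rightarrow> \<infinity> is taken; for p in
the component of Gamma - e containing p_e, R_a = 0 and R_b = t, otherwise R_a = t, R_b = 0.\<close>
definition same_side :: "'e set \<Rightarrow> ('e \<Rightarrow> 'v \<times> 'v) \<Rightarrow> 'e \<Rightarrow> 'v \<Rightarrow> bool" where
  "same_side E ends e p \<longleftrightarrow> (fst (ends e), p) \<in> (adj_rel (E - {e}) ends)\<^sup>*"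

definition y_term1 :: "'v set \<Rightarrow> 'e set \<Rightarrow> ('e \<Rightarrow> 'v \<times> 'v) \<Rightarrow> ('e \<Rightarrow> real) \<Rightarrow> 'e \<Rightarrow> real" where
  "y_term1 V E ends L e =
     (if is_bridge V E ends e
      then Lim at_top (\<lambda>t::real. L e * t\<^sup>2 / (L e + t)\<^sup>2)
      else (let R = R_edge V E ends L e in L e * R\<^sup>2 / (L e + R)\<^sup>2))"

definition y_term2 :: "'v set \<Rightarrow> 'e set \<Rightarrow> ('e \<Rightarrow> 'v \<times> 'v) \<Rightarrow> ('e \<Rightarrow> real) \<Rightarrow> 'e \<Rightarrow> 'v \<Rightarrow> real" where
  "y_term2 V E ends L e p =
     (if is_bridge V E ends e
      then Lim at_top (\<lambda>t::real.
             let ra = (if same_side E ends e p then 0 else t);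
                 rb = (if same_side E ends e p then t else 0)
             in L e * (ra - rb)\<^sup>2 / (L e + t)\<^sup>2)
      else (let R = R_edge V E ends L e in
            L e * (R_a V E ends L e p - R_b V E ends L e p)\<^sup>2 / (L e + R)\<^sup>2))"

definition y_inv :: "'v set \<Rightarrow> 'e set \<Rightarrow> ('e \<Rightarrow> 'v \<times> 'v) \<Rightarrow> ('e \<Rightarrow> real) \<Rightarrow> 'v \<Rightarrow> real" where
  "y_inv V E ends L p =
     (1/4) * (\<Sum>e\<in>E. y_term1 V E ends L e) + (3/4) * (\<Sum>e\<in>E. y_term2 V E ends L e p)"

end

theory Submission
  imports Defs
begin

text \<open>On at most three vertices every potential is explicit. Parallel edges between \<open>x\<close> and
  \<open>y\<close> act as one resistor of conductance \<open>c(x,y) = \<Sum> 1/L\<^sub>e\<close>, and with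
  \<open>\<sigma> = c(a,b) c(a,c) + c(a,b) c(b,c) + c(a,c) c(b,c)\<close> the potential \<open>j\<^sub>b(x,a)\<close> equals
  \<open>(c(a,c) + c(b,c))/\<sigma>\<close>, \<open>c(a,c)/\<sigma>\<close>, \<open>0\<close> at \<open>x = a, c, b\<close>. Deleting an edge \<open>e\<close>
  between \<open>a\<close> and \<open>b\<close> only lowers \<open>c(a,b)\<close> by \<open>1/L\<^sub>e\<close>, so both terms of \<open>y\<close>
  contributed by \<open>e\<close> collapse to \<open>r(a,b)\<^sup>2/L\<^sub>e = ((c(a,c) + c(b,c))/\<sigma>)\<^sup>2/L\<^sub>e\<close>, except that
  the second is \<open>((c(b,c) - c(a,c))/\<sigma>)\<^sup>2/L\<^sub>e\<close> when \<open>p\<close> is the third vertex; bridges fit the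
  same formula and self-loops contribute nothing. Summing over the edges and comparing with
  \<open>Kf = 2 (c(a,b) + c(a,c) + c(b,c))/\<sigma>\<close> leaves a polynomial identity; two vertices are the
  degenerate case \<open>r(a,b) = 1/c(a,b)\<close>.\<close>

definition edges_between :: "'e set \<Rightarrow> ('e \<Rightarrow> 'v \<times> 'v) \<Rightarrow> 'v \<Rightarrow> 'v \<Rightarrow> 'e set" where
  "edges_between E ends x y = {e\<in>E. ends e = (x, y) \<or> ends e = (y, x)}"

definition conductance :: "'e set \<Rightarrow> ('e \<Rightarrow> 'v \<times> 'v) \<Rightarrow> ('e \<Rightarrow> real) \<Rightarrow> 'v \<Rightarrow> 'v \<Rightarrow> real" where
  "conductance E ends L x y = (\<Sum>e\<in>edges_between E ends x y. 1 / L e)"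

lemma edges_between_commute: "edges_between E ends x y = edges_between E ends y x"
  unfolding edges_between_def by auto

lemma conductance_commute: "conductance E ends L x y = conductance E ends L y x"
  by (simp only: conductance_def edges_between_commute[of E ends x y])

lemma conductance_nonneg: "\<forall>e\<in>E. L e > 0 \<Longrightarrow> conductance E ends L x y \<ge> 0"
  unfolding conductance_def edges_between_def by (rule sum_nonneg) auto

lemma conductance_pos:
  assumes "finite E" "\<forall>e\<in>E. L e > 0" "e \<in> edges_between E ends x y"
  shows "conductance E ends L x y > 0"
  unfolding conductance_def using assms by (intro sum_pos2[of _ e]) (auto simp: edges_between_def)

lemma adj_rel_if_conductance_nonzero:
  assumes "conductance E ends L x y \<noteq> 0"
  shows "(x, y) \<in> adj_rel E ends"
proof (rule ccontr)
  assume "(x, y) \<notin> adj_rel E ends"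
  then have "edges_between E ends x y = {}"
    unfolding edges_between_def adj_rel_def by auto
  then show False
    using assms by (simp add: conductance_def)
qed

lemma conductance_Diff_edge:
  assumes "finite E" "e \<in> E"
  shows "conductance E ends L x y =
    conductance (E - {e}) ends L x y + (if e \<in> edges_between E ends x y then 1 / L e else 0)"
proof -
  have "edges_between (E - {e}) ends x y = edges_between E ends x y - {e}"
    unfolding edges_between_def by auto
  then show ?thesis
    using assms by (simp add: conductance_def sum_diff1 edges_between_def)
qed

lemma edge_outflow_eq_sum:
  assumes "fst (ends e) \<in> V" "snd (ends e) \<in> V" "finite V"
  shows "edge_outflow ends L phi e x =
    (\<Sum>y\<in>V - {x}. if e \<in> edges_between {e} ends x y then (phi x - phi y) / L e else 0)"
  using assms
  by (cases "ends e"; cases "fst (ends e) = x"; cases "snd (ends e) = x")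
    (auto simp: edge_outflow_def edges_between_def sum.delta if_distrib cong: if_cong)

lemma sum_edge_outflow_eq_conductance:
  assumes "finite V" "finite E" "\<forall>e\<in>E. fst (ends e) \<in> V \<and> snd (ends e) \<in> V"
  shows "(\<Sum>e\<in>E. edge_outflow ends L phi e x) =
    (\<Sum>y\<in>V - {x}. conductance E ends L x y * (phi x - phi y))"
proof -
  have "(\<Sum>e\<in>E. edge_outflow ends L phi e x) =
     (\<Sum>y\<in>V - {x}. \<Sum>e\<in>E. if e \<in> edges_between {e} ends x y then (phi x - phi y) / L e else 0)"
    using assms by (subst sum.swap) (intro sum.cong refl edge_outflow_eq_sum; auto)
  also have "\<dots> = (\<Sum>y\<in>V - {x}. conductance E ends L x y * (phi x - phi y))"
    using assms(2)
    by (intro sum.cong refl)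
      (auto simp: conductance_def sum_distrib_right edges_between_def sum.inter_filter[symmetric])
  finally show ?thesis .
qed

lemma sum_times_edge_outflow:
  assumes "fst (ends e) \<in> V" "snd (ends e) \<in> V" "finite V"
  shows "(\<Sum>x\<in>V. d x * edge_outflow ends L d e x) =
    (d (fst (ends e)) - d (snd (ends e)))\<^sup>2 / L e"
proof -
  obtain u w where uw: "ends e = (u, w)" by (cases "ends e")
  have "(\<Sum>x\<in>V. d x * edge_outflow ends L d e x) =
     (\<Sum>x\<in>V. if u = x then d x * ((d x - d w) / L e) else 0) +
     (\<Sum>x\<in>V. if w = x then d x * ((d x - d u) / L e) else 0)"
    unfolding sum.distrib[symmetric]
    by (rule sum.cong) (auto simp: edge_outflow_def uw ring_distribs)
  also have "\<dots> = d u * ((d u - d w) / L e) + d w * ((d w - d u) / L e)"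
    using assms uw by (simp add: sum.delta)
  also have "\<dots> = (d u - d w)\<^sup>2 / L e"
    by (simp add: power2_eq_square add_divide_distrib[symmetric] algebra_simps)
  finally show ?thesis using uw by simp
qed

lemma edge_outflow_diff:
  "edge_outflow ends L (\<lambda>u. phi u - psi u) e x =
    edge_outflow ends L phi e x - edge_outflow ends L psi e x"
  by (auto simp: edge_outflow_def diff_divide_distrib)

text \<open>Energy argument: \<open>\<Sum>\<^sub>e (d p\<^sub>e - d q\<^sub>e)\<^sup>2/L\<^sub>e\<close> equals the sum over the vertices of
  \<open>d\<close> times the net outflow, which vanishes, so \<open>d\<close> is constant along every edge.\<close>
lemma constant_if_sourceless:
  assumes mg: "metrized_graph V E ends L"
    and sourceless: "\<forall>x\<in>V. (\<Sum>e\<in>E. edge_outflow ends L d e x) = 0"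
    and "x \<in> V" "y \<in> V"
  shows "d x = d y"
proof -
  have fV: "finite V" and fE: "finite E"
    and edge: "\<forall>e\<in>E. fst (ends e) \<in> V \<and> snd (ends e) \<in> V \<and> L e > 0"
    and con: "graph_connected V E ends"
    using mg unfolding metrized_graph_def by auto
  have "(\<Sum>e\<in>E. (d (fst (ends e)) - d (snd (ends e)))\<^sup>2 / L e) =
      (\<Sum>e\<in>E. \<Sum>x\<in>V. d x * edge_outflow ends L d e x)"
    using edge fV by (simp add: sum_times_edge_outflow)
  also have "\<dots> = (\<Sum>x\<in>V. d x * (\<Sum>e\<in>E. edge_outflow ends L d e x))"
    by (subst sum.swap) (simp add: sum_distrib_left)
  also have "\<dots> = 0"
    using sourceless by simp
  finally have "(\<Sum>e\<in>E. (d (fst (ends e)) - d (snd (ends e)))\<^sup>2 / L e) = 0" .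
  then have "\<forall>e\<in>E. (d (fst (ends e)) - d (snd (ends e)))\<^sup>2 / L e = 0"
    using fE edge by (subst sum_nonneg_eq_0_iff[symmetric]) (auto intro!: divide_nonneg_pos)
  then have edge_eq: "d (fst (ends e)) = d (snd (ends e))" if "e \<in> E" for e
    using that edge by fastforce
  have adj: "d u = d w" if "(u, w) \<in> adj_rel E ends" for u w
    using that edge_eq unfolding adj_rel_def by (auto; metis fst_conv snd_conv)
  have "(x, y) \<in> (adj_rel E ends)\<^sup>*"
    using con assms(3,4) unfolding graph_connected_def by auto
  then show ?thesis
    by (induction rule: rtrancl_induct) (auto dest: adj)
qed

lemma volt_eqI:
  assumes mg: "metrized_graph V E ends L" and pot: "is_potential V E ends L y z phi"
    and z: "z \<in> V" "phi z = 0" and outside: "\<forall>u. u \<notin> V \<longrightarrow> phi u = 0"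
  shows "volt V E ends L z x y = phi x"
proof -
  have "psi = phi"
    if pot': "is_potential V E ends L y z psi" and "psi z = 0"
      and outside': "\<forall>u. u \<notin> V \<longrightarrow> psi u = 0"
    for psi
  proof
    fix u
    show "psi u = phi u"
    proof (cases "u \<in> V")
      case True
      have "psi u - phi u = psi z - phi z"
        using constant_if_sourceless[OF mg _ True z(1), of "\<lambda>u. psi u - phi u"] pot pot'
        by (simp add: is_potential_def edge_outflow_diff sum_subtractf)
      then show ?thesis
        using z(2) \<open>psi z = 0\<close> by simp
    next
      case False
      then show ?thesis
        using outside outside' by simp
    qed
  qed
  then have "(THE phi. is_potential V E ends L y z phi \<and> phi z = 0 \<and>
      (\<forall>u. u \<notin> V \<longrightarrow> phi u = 0)) = phi"
    using pot z outside by (intro the_equality) blast+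
  then show ?thesis
    unfolding volt_def by simp
qed

lemma volt_eq_if_conductance_balance:
  assumes mg: "metrized_graph V E ends L"
    and "z \<in> V" "phi z = 0" "\<forall>u. u \<notin> V \<longrightarrow> phi u = 0"
    and balance: "\<And>x. x \<in> V \<Longrightarrow>
      (\<Sum>w\<in>V - {x}. conductance E ends L x w * (phi x - phi w)) =
        (if x = y then 1 else 0) - (if x = z then 1 else 0)"
  shows "volt V E ends L z x y = phi x"
proof (rule volt_eqI[OF mg _ assms(2-4)])
  have "finite V" "finite E" "\<forall>e\<in>E. fst (ends e) \<in> V \<and> snd (ends e) \<in> V"
    using mg unfolding metrized_graph_def by auto
  then show "is_potential V E ends L y z phi"
    unfolding is_potential_def by (simp add: sum_edge_outflow_eq_conductance balance)
qed

lemma volt_self: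
  assumes "metrized_graph V E ends L" "z \<in> V"
  shows "volt V E ends L z x z = 0"
  using volt_eq_if_conductance_balance[OF assms, of "\<lambda>_. 0"] by simp

lemma adj_rel_sym: "(x, y) \<in> adj_rel E ends \<Longrightarrow> (y, x) \<in> adj_rel E ends"
  unfolding adj_rel_def by auto

lemma graph_connected_two:
  assumes "V = {a, b}" "(a, b) \<in> adj_rel E ends"
  shows "graph_connected V E ends"
  using assms adj_rel_sym[OF assms(2)] unfolding graph_connected_def by auto

lemma graph_connected_three:
  assumes "V = {a, b, c}" "(a, b) \<in> adj_rel E ends" "(a, c) \<in> adj_rel E ends"
  shows "graph_connected V E ends"
proof -
  have "(x, a) \<in> (adj_rel E ends)\<^sup>* \<and> (a, x) \<in> (adj_rel E ends)\<^sup>*" if "x \<in> V" for x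
    using that assms adj_rel_sym[OF assms(2)] adj_rel_sym[OF assms(3)] by auto
  then show ?thesis
    unfolding graph_connected_def by (meson rtrancl_trans)
qed

lemma graph_connected_Diff_loop:
  assumes "graph_connected V E ends" "fst (ends e) = snd (ends e)"
  shows "graph_connected V (E - {e}) ends"
proof -
  have "adj_rel E ends \<subseteq> (adj_rel (E - {e}) ends)\<^sup>="
  proof
    fix uw assume "uw \<in> adj_rel E ends"
    then obtain x y e' where "uw = (x, y)" "e' \<in> E" "ends e' = (x, y) \<or> ends e' = (y, x)"
      unfolding adj_rel_def by auto
    then show "uw \<in> (adj_rel (E - {e}) ends)\<^sup>="
      using assms(2) unfolding adj_rel_def by (cases "e' = e") auto
  qed
  then have "(adj_rel E ends)\<^sup>* \<subseteq> (adj_rel (E - {e}) ends)\<^sup>*"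
    by (metis rtrancl_mono rtrancl_reflcl)
  then show ?thesis
    using assms(1) unfolding graph_connected_def by blast
qed

lemma metrized_graph_Diff:
  "metrized_graph V E ends L \<Longrightarrow> graph_connected V (E - {e}) ends \<Longrightarrow>
    metrized_graph V (E - {e}) ends L"
  unfolding metrized_graph_def by auto

lemma exists_conductance_pos:
  assumes mg: "metrized_graph V E ends L" and "x \<in> V" "y \<in> V" "y \<noteq> x"
  shows "\<exists>w\<in>V. w \<noteq> x \<and> conductance E ends L x w > 0"
proof (rule ccontr)
  assume none: "\<not> ?thesis"
  have fE: "finite E" and edge: "\<forall>e\<in>E. fst (ends e) \<in> V \<and> snd (ends e) \<in> V \<and> L e > 0"
    and con: "graph_connected V E ends"
    using mg unfolding metrized_graph_def by auto
  have "(x, y) \<in> (adj_rel E ends)\<^sup>*"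
    using con assms(2,3) unfolding graph_connected_def by auto
  then have "y = x"
  proof (induction rule: rtrancl_induct)
    case (step u w)
    then obtain e where e: "e \<in> edges_between E ends x w"
      unfolding adj_rel_def edges_between_def by auto
    then have "w \<in> V"
      using edge unfolding edges_between_def
      by (metis (mono_tags) fst_conv mem_Collect_eq snd_conv)
    moreover have "conductance E ends L x w > 0"
      using conductance_pos[OF fE _ e] edge by auto
    ultimately show ?case
      using none by auto
  qed simp
  then show False
    using assms(4) by simp
qed

lemma conductance_pos_two:
  assumes "metrized_graph V E ends L" "V = {a, b}" "a \<noteq> b"
  shows "conductance E ends L a b > 0"
  using exists_conductance_pos[OF assms(1), of a b] assms by auto

definition sigma3 :: "'e set \<Rightarrow> ('e \<Rightarrow> 'v \<times> 'v) \<Rightarrow> ('e \<Rightarrow> real) \<Rightarrow> 'v \<Rightarrow> 'v \<Rightarrow> 'v \<Rightarrow> real" where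
  "sigma3 E ends L a b c =
    conductance E ends L a b * conductance E ends L a c +
    conductance E ends L a b * conductance E ends L b c +
    conductance E ends L a c * conductance E ends L b c"

lemma sigma3_swap:
  "sigma3 E ends L a b c = sigma3 E ends L b a c"
  "sigma3 E ends L a b c = sigma3 E ends L a c b"
  unfolding sigma3_def by (simp_all add: conductance_commute algebra_simps)

lemma sigma3_nonneg: "\<forall>e\<in>E. L e > 0 \<Longrightarrow> sigma3 E ends L a b c \<ge> 0"
  unfolding sigma3_def by (simp add: conductance_nonneg)

lemma sigma3_pos:
  assumes mg: "metrized_graph V E ends L" and V: "V = {a, b, c}" "a \<noteq> b" "a \<noteq> c" "b \<noteq> c"
  shows "sigma3 E ends L a b c > 0"
proof -
  have Lpos: "\<forall>e\<in>E. L e > 0"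
    using mg unfolding metrized_graph_def by auto
  have "conductance E ends L a b > 0 \<or> conductance E ends L a c > 0"
    "conductance E ends L a b > 0 \<or> conductance E ends L b c > 0"
    "conductance E ends L a c > 0 \<or> conductance E ends L b c > 0"
    using exists_conductance_pos[OF mg, of a b] exists_conductance_pos[OF mg, of b a]
      exists_conductance_pos[OF mg, of c a] V
    by (auto simp: conductance_commute)
  moreover have "conductance E ends L x w \<ge> 0" for x w
    using conductance_nonneg[OF Lpos] .
  ultimately show ?thesis
    unfolding sigma3_def by (smt (verit) mult_nonneg_nonneg mult_pos_pos)
qed

lemma graph_connected_if_sigma3_pos:
  assumes "V = {a, b, c}" "sigma3 E ends L a b c > 0"
  shows "graph_connected V E ends"
proof -
  let ?g = "conductance E ends L"
  have adj: "(x, y) \<in> adj_rel E ends" if "?g x y \<noteq> 0 \<or> ?g y x \<noteq> 0" for x y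
    using that adj_rel_if_conductance_nonzero by (metis conductance_commute)
  consider "?g a b \<noteq> 0" "?g a c \<noteq> 0" | "?g a b \<noteq> 0" "?g b c \<noteq> 0" | "?g a c \<noteq> 0" "?g b c \<noteq> 0"
    using assms(2) unfolding sigma3_def by fastforce
  then show ?thesis
  proof cases
    case 1
    then show ?thesis
      using assms(1) by (intro graph_connected_three adj) auto
  next
    case 2
    have "V = {b, a, c}"
      using assms(1) by auto
    with 2 show ?thesis
      by (intro graph_connected_three adj) auto
  next
    case 3
    have "V = {c, a, b}"
      using assms(1) by auto
    with 3 show ?thesis
      by (intro graph_connected_three adj) auto
  qed
qed

lemma volt_two:
  assumes mg: "metrized_graph V E ends L" and V: "V = {a, b}" "a \<noteq> b"
  shows "volt V E ends L b x a = (if x = a then 1 / conductance E ends L a b else 0)"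
proof (rule volt_eq_if_conductance_balance[OF mg])
  fix x assume "x \<in> V"
  have minus: "V - {a} = {b}" "V - {b} = {a}"
    using V by auto
  from \<open>x \<in> V\<close> consider "x = a" | "x = b"
    using V by auto
  then show "(\<Sum>w\<in>V - {x}. conductance E ends L x w *
      ((if x = a then 1 / conductance E ends L a b else 0) -
       (if w = a then 1 / conductance E ends L a b else 0))) =
    (if x = a then 1 else 0) - (if x = b then 1 else 0)"
    using V(2) conductance_pos_two[OF mg V] by cases (simp_all add: minus conductance_commute)
qed (use V in auto)

lemma volt_three:
  assumes mg: "metrized_graph V E ends L" and V: "V = {a, b, c}" "a \<noteq> b" "a \<noteq> c" "b \<noteq> c"
  shows "volt V E ends L b x a =
    (if x = a then conductance E ends L a c + conductance E ends L b c
     else if x = c then conductance E ends L a c else 0) / sigma3 E ends L a b c"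
proof (rule volt_eq_if_conductance_balance[OF mg])
  fix x assume "x \<in> V"
  have minus: "V - {a} = {b, c}" "V - {b} = {a, c}" "V - {c} = {a, b}"
    using V by auto
  from \<open>x \<in> V\<close> consider "x = a" | "x = b" | "x = c"
    using V by auto
  then show "(\<Sum>w\<in>V - {x}. conductance E ends L x w *
      ((if x = a then conductance E ends L a c + conductance E ends L b c
        else if x = c then conductance E ends L a c else 0) / sigma3 E ends L a b c -
       (if w = a then conductance E ends L a c + conductance E ends L b c
        else if w = c then conductance E ends L a c else 0) / sigma3 E ends L a b c)) =
    (if x = a then 1 else 0) - (if x = b then 1 else 0)"
    using V(2-4) sigma3_pos[OF mg V]
    by cases
      (simp_all add: minus conductance_commute field_simps, simp_all add: sigma3_def algebra_simps)
qed (use V in auto)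

lemma eff_res_self:
  assumes "metrized_graph V E ends L" "a \<in> V"
  shows "eff_res V E ends L a a = 0"
  using volt_self[OF assms] unfolding eff_res_def .

lemma eff_res_two:
  assumes "metrized_graph V E ends L" "V = {a, b}" "a \<noteq> b"
  shows "eff_res V E ends L a b = 1 / conductance E ends L a b"
  using volt_two[OF assms, of a] unfolding eff_res_def by simp

lemma eff_res_three:
  assumes "metrized_graph V E ends L" "V = {a, b, c}" "a \<noteq> b" "a \<noteq> c" "b \<noteq> c"
  shows "eff_res V E ends L a b =
    (conductance E ends L a c + conductance E ends L b c) / sigma3 E ends L a b c"
  using volt_three[OF assms, of a] unfolding eff_res_def by simp

lemma kirchhoff_index_two:
  assumes "metrized_graph V E ends L" "V = {a, b}" "a \<noteq> b"
  shows "kirchhoff_index V E ends L = 1 / conductance E ends L a b"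
proof -
  have "V = {b, a}" "b \<noteq> a"
    using assms(2,3) by auto
  then show ?thesis
    using assms eff_res_two[OF assms] eff_res_two[OF assms(1) \<open>V = {b, a}\<close>]
      eff_res_self[OF assms(1)]
    by (simp add: kirchhoff_index_def conductance_commute)
qed

lemma kirchhoff_index_three:
  assumes mg: "metrized_graph V E ends L" and V: "V = {a, b, c}" "a \<noteq> b" "a \<noteq> c" "b \<noteq> c"
  shows "kirchhoff_index V E ends L =
    2 * (conductance E ends L a b + conductance E ends L a c + conductance E ends L b c) /
      sigma3 E ends L a b c"
proof -
  have perms: "V = {b, a, c}" "V = {a, c, b}" "V = {c, a, b}" "V = {b, c, a}" "V = {c, b, a}"
    using V by auto
  note res = eff_res_three[OF mg V] eff_res_three[OF mg perms(1)] eff_res_three[OF mg perms(2)]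
    eff_res_three[OF mg perms(3)] eff_res_three[OF mg perms(4)] eff_res_three[OF mg perms(5)]
  have sigma: "sigma3 E ends L b a c = sigma3 E ends L a b c"
    "sigma3 E ends L a c b = sigma3 E ends L a b c" "sigma3 E ends L c a b = sigma3 E ends L a b c"
    "sigma3 E ends L b c a = sigma3 E ends L a b c" "sigma3 E ends L c b a = sigma3 E ends L a b c"
    by (metis sigma3_swap)+
  have "sigma3 E ends L a b c > 0"
    by (rule sigma3_pos[OF mg V])
  then show ?thesis
    using V res eff_res_self[OF mg]
    by (simp add: kirchhoff_index_def conductance_commute sigma field_simps)
qed

lemma Lim_edge_term_at_top:
  assumes "l > (0::real)"
  shows "Lim at_top (\<lambda>t::real. l * t\<^sup>2 / (l + t)\<^sup>2) = l"
proof (rule tendsto_Lim)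
  have "((\<lambda>t::real. l / (1 + l / t)\<^sup>2) \<longlongrightarrow> l / (1 + 0)\<^sup>2) at_top"
    by (intro tendsto_intros tendsto_divide_0[OF tendsto_const] filterlim_at_top_imp_at_infinity
        filterlim_ident) simp
  moreover have "\<forall>\<^sub>F t in at_top. l / (1 + l / t)\<^sup>2 = l * t\<^sup>2 / (l + t)\<^sup>2"
    using eventually_gt_at_top[of 0]
    by eventually_elim (use assms in \<open>simp add: field_simps power2_eq_square\<close>)
  ultimately show "((\<lambda>t::real. l * t\<^sup>2 / (l + t)\<^sup>2) \<longlongrightarrow> l) at_top"
    using tendsto_cong by force
qed simp

lemma y_terms_bridge:
  assumes "is_bridge V E ends e" "L e > 0"
  shows "y_term1 V E ends L e = L e" "y_term2 V E ends L e p = L e"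
proof -
  show "y_term1 V E ends L e = L e"
    using assms Lim_edge_term_at_top[of "L e"] by (simp add: y_term1_def)
  show "y_term2 V E ends L e p = L e"
    using assms Lim_edge_term_at_top[of "L e"]
    by (cases "same_side E ends e p") (simp_all add: y_term2_def)
qed

lemma y_terms_loop:
  assumes mg: "metrized_graph V E ends L" and e: "e \<in> E" "fst (ends e) = snd (ends e)"
  shows "y_term1 V E ends L e = 0" "y_term2 V E ends L e p = 0"
proof -
  have con: "graph_connected V (E - {e}) ends"
    using mg e(2) unfolding metrized_graph_def by (simp add: graph_connected_Diff_loop)
  have "fst (ends e) \<in> V"
    using mg e(1) unfolding metrized_graph_def by auto
  then have "R_edge V E ends L e = 0" "R_a V E ends L e p = 0" "R_b V E ends L e p = 0"
    using volt_self[OF metrized_graph_Diff[OF mg con]] e(2)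
    by (simp_all add: R_edge_def R_a_def R_b_def eff_res_def)
  then show "y_term1 V E ends L e = 0" "y_term2 V E ends L e p = 0"
    using con by (simp_all add: y_term1_def y_term2_def is_bridge_def)
qed

text \<open>With \<open>R = N / s\<close> the resistance of \<open>\<Gamma> - e\<close> between the ends of \<open>e\<close>, the
  parallel combination \<open>l R / (l + R)\<close> equals \<open>N / (s + N / l)\<close>.\<close>
lemma edge_term_parallel:
  fixes l s N D :: real
  assumes "l > 0" "s > 0" "N \<ge> 0"
  shows "l * (D / s)\<^sup>2 / (l + N / s)\<^sup>2 = (D / (s + N / l))\<^sup>2 / l"
proof -
  have "l * s + N > 0"
    using assms by (simp add: add_pos_nonneg)
  moreover have "l + N / s = (l * s + N) / s" "s + N / l = (l * s + N) / l"
    using assms by (simp_all add: field_simps)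
  ultimately show ?thesis
    using assms by (simp add: power_divide power2_eq_square)
qed

lemma sigma3_Diff_edge:
  assumes "finite E" "e \<in> E" "ends e = (a, b)" "a \<noteq> c" "b \<noteq> c"
  shows "conductance E ends L a c = conductance (E - {e}) ends L a c"
    and "conductance E ends L b c = conductance (E - {e}) ends L b c"
    and "sigma3 E ends L a b c = sigma3 (E - {e}) ends L a b c +
      (conductance (E - {e}) ends L a c + conductance (E - {e}) ends L b c) / L e"
proof -
  show ac: "conductance E ends L a c = conductance (E - {e}) ends L a c"
    and bc: "conductance E ends L b c = conductance (E - {e}) ends L b c"
    using assms conductance_Diff_edge[OF assms(1,2), of ends L a c]
      conductance_Diff_edge[OF assms(1,2), of ends L b c]
    by (auto simp: edges_between_def)
  have "conductance E ends L a b = conductance (E - {e}) ends L a b + 1 / L e"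
    using assms conductance_Diff_edge[OF assms(1,2), of ends L a b]
    by (auto simp: edges_between_def)
  then show "sigma3 E ends L a b c = sigma3 (E - {e}) ends L a b c +
      (conductance (E - {e}) ends L a c + conductance (E - {e}) ends L b c) / L e"
    unfolding sigma3_def ac bc by (simp add: algebra_simps add_divide_distrib)
qed

lemma resistances_Diff_edge_two:
  assumes mg': "metrized_graph V (E - {e}) ends L" and V: "V = {a, b}" "a \<noteq> b"
    and e: "ends e = (a, b)" and p: "p \<in> V"
  defines "x \<equiv> conductance (E - {e}) ends L a b"
  shows "R_edge V E ends L e = 1 / x"
    and "(R_a V E ends L e p - R_b V E ends L e p)\<^sup>2 = (1 / x)\<^sup>2"
proof -
  have "V = {b, a}" "b \<noteq> a"
    using V by auto
  then have "R_a V E ends L e p = (if p = b then 1 / x else 0)"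
    "R_b V E ends L e p = (if p = a then 1 / x else 0)"
    using volt_two[OF mg' V] volt_two[OF mg'] e
    by (simp_all add: R_a_def R_b_def x_def conductance_commute)
  then show "(R_a V E ends L e p - R_b V E ends L e p)\<^sup>2 = (1 / x)\<^sup>2"
    using V p by auto
  show "R_edge V E ends L e = 1 / x"
    using eff_res_two[OF mg' V] e by (simp add: R_edge_def x_def)
qed

lemma y_terms_two_oriented:
  assumes mg: "metrized_graph V E ends L" and V: "V = {a, b}" "a \<noteq> b"
    and e: "e \<in> E" "ends e = (a, b)" and p: "p \<in> V"
  shows "y_term1 V E ends L e = (1 / conductance E ends L a b)\<^sup>2 / L e \<and>
    y_term2 V E ends L e p = (1 / conductance E ends L a b)\<^sup>2 / L e"
proof -
  have fE: "finite E" and Lpos: "\<forall>e\<in>E. L e > 0"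
    using mg unfolding metrized_graph_def by auto
  define x where "x = conductance (E - {e}) ends L a b"
  have g: "conductance E ends L a b = x + 1 / L e"
    using conductance_Diff_edge[OF fE e(1), of ends L a b] e
    by (simp add: x_def edges_between_def)
  have l: "L e > 0"
    using Lpos e(1) by simp
  show ?thesis
  proof (cases "is_bridge V E ends e")
    case True
    have "x = 0"
    proof (rule ccontr)
      assume "x \<noteq> 0"
      then have "graph_connected V (E - {e}) ends"
        using V(1) unfolding x_def by (intro graph_connected_two adj_rel_if_conductance_nonzero)
      then show False
        using True by (simp add: is_bridge_def)
    qed
    then show ?thesis
      using y_terms_bridge[of V E ends e L, OF True l] l g by (simp add: power2_eq_square)
  next
    case False
    then have mg': "metrized_graph V (E - {e}) ends L"
      using metrized_graph_Diff[OF mg] unfolding is_bridge_def by simp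
    note R = resistances_Diff_edge_two[OF mg' V e(2) p, folded x_def]
    have "x > 0"
      using conductance_pos_two[OF mg' V] unfolding x_def .
    then show ?thesis
      using False l edge_term_parallel[OF l \<open>x > 0\<close>, of 1 1] R(2)
      by (simp add: y_term1_def y_term2_def R(1) g)
  qed
qed

lemma y_terms_two:
  assumes mg: "metrized_graph V E ends L" and V: "V = {a, b}" "a \<noteq> b"
    and e: "e \<in> edges_between E ends a b" and p: "p \<in> V"
  shows "y_term1 V E ends L e = (1 / conductance E ends L a b)\<^sup>2 / L e \<and>
    y_term2 V E ends L e p = (1 / conductance E ends L a b)\<^sup>2 / L e"
proof -
  have "V = {b, a}" "b \<noteq> a"
    using V by auto
  then show ?thesis
    using e p y_terms_two_oriented[OF mg V, of e p]
      y_terms_two_oriented[OF mg \<open>V = {b, a}\<close>, of e p]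
    by (auto simp: edges_between_def conductance_commute)
qed

lemma sigma3_Diff_bridge:
  assumes "\<forall>e\<in>E. L e > 0" "V = {a, b, c}" "is_bridge V E ends e"
  shows "sigma3 (E - {e}) ends L a b c = 0"
proof -
  have "\<forall>e'\<in>E - {e}. L e' > 0"
    using assms(1) by simp
  then have "sigma3 (E - {e}) ends L a b c \<ge> 0"
    by (rule sigma3_nonneg)
  moreover have "\<not> sigma3 (E - {e}) ends L a b c > 0"
    using graph_connected_if_sigma3_pos[OF assms(2)] assms(3) unfolding is_bridge_def by blast
  ultimately show ?thesis
    by simp
qed

lemma resistances_Diff_edge_three:
  assumes mg': "metrized_graph V (E - {e}) ends L"
    and V: "V = {a, b, c}" "a \<noteq> b" "a \<noteq> c" "b \<noteq> c"
    and e: "ends e = (a, b)" and p: "p \<in> V"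
  defines "y \<equiv> conductance (E - {e}) ends L a c" and "z \<equiv> conductance (E - {e}) ends L b c"
    and "s \<equiv> sigma3 (E - {e}) ends L a b c"
  shows "R_edge V E ends L e = (y + z) / s"
    and "(R_a V E ends L e p - R_b V E ends L e p)\<^sup>2 = ((if p = c then z - y else y + z) / s)\<^sup>2"
proof -
  have "V = {b, a, c}"
    using V by auto
  have R: "R_a V E ends L e p = (if p = b then z + y else if p = c then z else 0) / s"
    "R_b V E ends L e p = (if p = a then y + z else if p = c then y else 0) / s"
    using volt_three[OF mg' V] volt_three[OF mg' \<open>V = {b, a, c}\<close>] V e
    by (simp_all add: R_a_def R_b_def y_def z_def s_def sigma3_swap(1)[of _ _ _ a b]
        conductance_commute)
  show "R_edge V E ends L e = (y + z) / s"
    using eff_res_three[OF mg' V] e by (simp add: R_edge_def y_def z_def s_def)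
  show "(R_a V E ends L e p - R_b V E ends L e p)\<^sup>2 = ((if p = c then z - y else y + z) / s)\<^sup>2"
    unfolding R using V p by (auto simp: diff_divide_distrib add.commute)
qed

lemma y_terms_three_oriented:
  assumes mg: "metrized_graph V E ends L" and V: "V = {a, b, c}" "a \<noteq> b" "a \<noteq> c" "b \<noteq> c"
    and e: "e \<in> E" "ends e = (a, b)" and p: "p \<in> V"
  shows "y_term1 V E ends L e =
      ((conductance E ends L a c + conductance E ends L b c) / sigma3 E ends L a b c)\<^sup>2 / L e \<and>
    y_term2 V E ends L e p =
      ((if p = c then conductance E ends L b c - conductance E ends L a c
        else conductance E ends L a c + conductance E ends L b c) / sigma3 E ends L a b c)\<^sup>2 / L e"
proof -
  have fE: "finite E" and Lpos: "\<forall>e\<in>E. L e > 0"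
    using mg unfolding metrized_graph_def by auto
  have l: "L e > 0"
    using Lpos e(1) by simp
  define y where "y = conductance (E - {e}) ends L a c"
  define z where "z = conductance (E - {e}) ends L b c"
  define s where "s = sigma3 (E - {e}) ends L a b c"
  note Diff = sigma3_Diff_edge[of E e ends a b c L, OF fE e V(3,4), folded y_def z_def s_def]
  have Lpos': "\<forall>e'\<in>E - {e}. L e' > 0"
    using Lpos by simp
  have "y \<ge> 0" "z \<ge> 0"
    unfolding y_def z_def using Lpos' by (simp_all add: conductance_nonneg)
  show ?thesis
  proof (cases "is_bridge V E ends e")
    case True
    then have "s = 0"
      unfolding s_def using sigma3_Diff_bridge[OF Lpos V(1)] by simp
    then have "y * z = 0"
      using conductance_nonneg[OF Lpos'] unfolding s_def sigma3_def y_def z_def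
      by (smt (verit) mult_nonneg_nonneg)
    then have "z - y = y + z \<or> z - y = - (y + z)"
      by auto
    moreover have sigma: "sigma3 E ends L a b c = (y + z) / L e"
      using Diff(3) \<open>s = 0\<close> by simp
    moreover have "y + z > 0"
      using sigma3_pos[OF mg V] sigma l by (simp add: zero_less_divide_iff)
    ultimately show ?thesis
      using y_terms_bridge[of V E ends e L, OF True l] Diff(1,2) l
      by (auto simp: power2_eq_square)
  next
    case False
    then have mg': "metrized_graph V (E - {e}) ends L"
      using metrized_graph_Diff[OF mg] unfolding is_bridge_def by simp
    note R = resistances_Diff_edge_three[OF mg' V e(2) p, folded y_def z_def s_def]
    have "s > 0"
      using sigma3_pos[OF mg' V] unfolding s_def .
    then show ?thesis
      using False l edge_term_parallel[OF l \<open>s > 0\<close>] \<open>y \<ge> 0\<close> \<open>z \<ge> 0\<close> Diff R(2)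
      by (simp add: y_term1_def y_term2_def R(1))
  qed
qed

lemma y_terms_three:
  assumes mg: "metrized_graph V E ends L" and V: "V = {a, b, c}" "a \<noteq> b" "a \<noteq> c" "b \<noteq> c"
    and e: "e \<in> edges_between E ends a b" and p: "p \<in> V"
  shows "y_term1 V E ends L e =
      ((conductance E ends L a c + conductance E ends L b c) / sigma3 E ends L a b c)\<^sup>2 / L e \<and>
    y_term2 V E ends L e p =
      ((if p = c then conductance E ends L b c - conductance E ends L a c
        else conductance E ends L a c + conductance E ends L b c) / sigma3 E ends L a b c)\<^sup>2 / L e"
proof -
  have "V = {b, a, c}" "b \<noteq> a"
    using V by auto
  then show ?thesis
    using e p y_terms_three_oriented[OF mg V, of e p]
      y_terms_three_oriented[OF mg \<open>V = {b, a, c}\<close> _ V(4,3), of e p]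
    by (auto simp: edges_between_def add.commute sigma3_swap(1)[of _ _ _ b a] power2_commute
        power_divide)
qed

lemma sum_edges_between_eq:
  assumes "\<And>e. e \<in> edges_between E ends x y \<Longrightarrow> f e = K / L e"
  shows "(\<Sum>e\<in>edges_between E ends x y. f e) = K * conductance E ends L x y"
  using assms by (simp add: conductance_def sum_distrib_left)

lemma sum_loops_y_terms:
  assumes "metrized_graph V E ends L"
  shows "(\<Sum>e\<in>{e\<in>E. fst (ends e) = snd (ends e)}. y_term1 V E ends L e) = 0"
    and "(\<Sum>e\<in>{e\<in>E. fst (ends e) = snd (ends e)}. y_term2 V E ends L e p) = 0"
  using y_terms_loop[OF assms] by simp_all

lemma sum_edges_two:
  assumes "\<forall>e\<in>E. fst (ends e) \<in> {a, b} \<and> snd (ends e) \<in> {a, b}" "finite E" "a \<noteq> b"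
  shows "sum f E = sum f (edges_between E ends a b) + sum f {e\<in>E. fst (ends e) = snd (ends e)}"
proof -
  have "E = edges_between E ends a b \<union> {e\<in>E. fst (ends e) = snd (ends e)}"
    using assms(1) unfolding edges_between_def by (auto simp: prod_eq_iff)
  then have "sum f E = sum f (edges_between E ends a b \<union> {e\<in>E. fst (ends e) = snd (ends e)})"
    by simp
  also have "\<dots> = sum f (edges_between E ends a b) + sum f {e\<in>E. fst (ends e) = snd (ends e)}"
    using assms(2,3) by (intro sum.union_disjoint) (auto simp: edges_between_def)
  finally show ?thesis .
qed

lemma sum_edges_three:
  assumes "\<forall>e\<in>E. fst (ends e) \<in> {a, b, c} \<and> snd (ends e) \<in> {a, b, c}" "finite E"
    "a \<noteq> b" "a \<noteq> c" "b \<noteq> c"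
  shows "sum f E = sum f (edges_between E ends a b) + sum f (edges_between E ends a c) +
    sum f (edges_between E ends b c) + sum f {e\<in>E. fst (ends e) = snd (ends e)}"
proof -
  let ?loops = "{e\<in>E. fst (ends e) = snd (ends e)}"
  have "E = edges_between E ends a b \<union> edges_between E ends a c \<union> edges_between E ends b c \<union>
      ?loops"
    using assms(1) unfolding edges_between_def by (auto simp: prod_eq_iff)
  then have "sum f E = sum f (edges_between E ends a b \<union> edges_between E ends a c \<union>
      edges_between E ends b c \<union> ?loops)"
    by simp
  also have "\<dots> = sum f (edges_between E ends a b) + sum f (edges_between E ends a c) +
      sum f (edges_between E ends b c) + sum f ?loops"
  proof -
    have "finite (edges_between E ends x y)" for x y
      using assms(2) by (simp add: edges_between_def)
    moreover have "edges_between E ends a b \<inter> edges_between E ends a c = {}"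
      "edges_between E ends a b \<inter> edges_between E ends b c = {}"
      "edges_between E ends a c \<inter> edges_between E ends b c = {}"
      using assms(3-5) by (auto simp: edges_between_def)
    moreover have "edges_between E ends x y \<inter> ?loops = {}" if "x \<noteq> y" for x y
      using that by (auto simp: edges_between_def)
    ultimately show ?thesis
      using assms(2-5) by (simp add: sum.union_disjoint Int_Un_distrib2)
  qed
  finally show ?thesis .
qed

lemma y_inv_two:
  assumes mg: "metrized_graph V E ends L" and V: "V = {a, b}" "a \<noteq> b" and p: "p \<in> V"
  shows "y_inv V E ends L p = 1 / conductance E ends L a b"
proof -
  let ?g = "conductance E ends L a b"
  have "finite E" "\<forall>e\<in>E. fst (ends e) \<in> {a, b} \<and> snd (ends e) \<in> {a, b}"
    using mg V(1) unfolding metrized_graph_def by auto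
  note split = sum_edges_two[OF this(2,1) V(2)]
  have "(\<Sum>e\<in>E. y_term1 V E ends L e) = (1 / ?g)\<^sup>2 * ?g"
    "(\<Sum>e\<in>E. y_term2 V E ends L e p) = (1 / ?g)\<^sup>2 * ?g"
    unfolding split sum_loops_y_terms[OF mg]
    using y_terms_two[OF mg V _ p] by (simp_all add: sum_edges_between_eq)
  moreover have "?g > 0"
    by (rule conductance_pos_two[OF mg V])
  ultimately show ?thesis
    by (simp add: y_inv_def power2_eq_square)
qed

lemma y_inv_three_identity:
  fixes A B C s :: real
  assumes s: "s = A * B + A * C + B * C" and "s \<noteq> 0"
  shows "1 / 4 * (((B + C) / s)\<^sup>2 * A + ((A + C) / s)\<^sup>2 * B + ((A + B) / s)\<^sup>2 * C) +
      3 / 4 * (((B + C) / s)\<^sup>2 * A + ((A + C) / s)\<^sup>2 * B + ((B - A) / s)\<^sup>2 * C) = (A + B + C) / s"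
proof -
  have "1 / 4 * (((B + C) / s)\<^sup>2 * A + ((A + C) / s)\<^sup>2 * B + ((A + B) / s)\<^sup>2 * C) +
      3 / 4 * (((B + C) / s)\<^sup>2 * A + ((A + C) / s)\<^sup>2 * B + ((B - A) / s)\<^sup>2 * C) =
    ((B + C)\<^sup>2 * A + (A + C)\<^sup>2 * B + ((A + B)\<^sup>2 + 3 * (B - A)\<^sup>2) * C +
      3 * ((B + C)\<^sup>2 * A + (A + C)\<^sup>2 * B)) / (4 * s\<^sup>2)"
    using assms(2) by (simp add: power_divide field_simps)
  also have "\<dots> = 4 * (A + B + C) * s / (4 * s\<^sup>2)"
    unfolding s power2_eq_square by algebra
  also have "\<dots> = (A + B + C) / s"
    using assms(2) by (simp add: power2_eq_square field_simps)
  finally show ?thesis .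
qed

lemma y_inv_three:
  assumes mg: "metrized_graph V E ends L" and V: "V = {a, b, c}" "a \<noteq> b" "a \<noteq> c" "b \<noteq> c"
  shows "y_inv V E ends L a =
    (conductance E ends L a b + conductance E ends L a c + conductance E ends L b c) /
      sigma3 E ends L a b c"
proof -
  define A where "A = conductance E ends L a b"
  define B where "B = conductance E ends L a c"
  define C where "C = conductance E ends L b c"
  define s where "s = sigma3 E ends L a b c"
  have "finite E" "\<forall>e\<in>E. fst (ends e) \<in> {a, b, c} \<and> snd (ends e) \<in> {a, b, c}"
    using mg V(1) unfolding metrized_graph_def by auto
  note split = sum_edges_three[OF this(2,1) V(2-4)]
  have perms: "V = {a, c, b}" "V = {b, c, a}"
    using V by auto
  have sigma: "sigma3 E ends L a c b = s" "sigma3 E ends L b c a = s"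
    unfolding s_def by (metis sigma3_swap)+
  note terms = y_terms_three[OF mg V _ , of _ a]
    y_terms_three[OF mg perms(1) V(3,2) V(4)[symmetric], of _ a]
    y_terms_three[OF mg perms(2) V(4) V(2,3)[symmetric], of _ a]
  have sums:
    "(\<Sum>e\<in>E. y_term1 V E ends L e) =
      ((B + C) / s)\<^sup>2 * A + ((A + C) / s)\<^sup>2 * B + ((A + B) / s)\<^sup>2 * C"
    "(\<Sum>e\<in>E. y_term2 V E ends L e a) =
      ((B + C) / s)\<^sup>2 * A + ((A + C) / s)\<^sup>2 * B + ((B - A) / s)\<^sup>2 * C"
    unfolding split sum_loops_y_terms[OF mg] using terms V
    by (simp_all add: sum_edges_between_eq A_def B_def C_def s_def sigma conductance_commute)
  have "s = A * B + A * C + B * C"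
    unfolding A_def B_def C_def s_def sigma3_def ..
  moreover have "s \<noteq> 0"
    using sigma3_pos[OF mg V] unfolding s_def by simp
  ultimately show ?thesis
    unfolding y_inv_def sums A_def[symmetric] B_def[symmetric] C_def[symmetric] s_def[symmetric]
    by (rule y_inv_three_identity)
qed

theorem corollary3p10:
  fixes V :: "'v set" and E :: "'e set" and ends :: "'e \<Rightarrow> 'v \<times> 'v" and L :: "'e \<Rightarrow> real"
    and p :: 'v
  assumes "metrized_graph V E ends L" and "p \<in> V"
  shows "(card V = 2 \<longrightarrow> kirchhoff_index V E ends L = y_inv V E ends L p) \<and>
         (card V = 3 \<longrightarrow> kirchhoff_index V E ends L = 2 * y_inv V E ends L p)"
proof (intro conjI impI)
  assume "card V = 2"
  then obtain a b where V: "V = {a, b}" "a \<noteq> b"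
    by (auto simp: card_2_iff)
  show "kirchhoff_index V E ends L = y_inv V E ends L p"
    using kirchhoff_index_two[OF assms(1) V] y_inv_two[OF assms(1) V assms(2)] by simp
next
  assume "card V = 3"
  then have "card (V - {p}) = 2"
    using assms(2) by simp
  then obtain b c where "V - {p} = {b, c}" "b \<noteq> c"
    by (auto simp: card_2_iff)
  then have V: "V = {p, b, c}" "p \<noteq> b" "p \<noteq> c" "b \<noteq> c"
    using assms(2) by auto
  show "kirchhoff_index V E ends L = 2 * y_inv V E ends L p"
    using kirchhoff_index_three[OF assms(1) V] y_inv_three[OF assms(1) V] by simp
qed

end
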